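(* Let $\lambda\in\mathbb{C}^n$. The superspace $M(\lambda)$ is a $\mathfrak{gl}(m,n)$-module, where $\mathfrak{gl}(m,n)_0=\mathfrak{gl}_m\oplus\mathfrak{gl}_n$ acts by the tensor product action and the odd part acts by $$E_{i,m+j}\cdot e_{i_1}\wedge\dots\wedge e_{i_r}y(\lambda')=(-1)^r\lambda'_j\,e_i\wedge e_{i_1}\wedge\dots\wedge e_{i_r}y(\lambda'-e_j),$$ $$E_{m+j,i}\cdot e_{i_1}\wedge\dots\wedge e_{i_r}y(\lambda')=\begin{cases}0,& i\notin\{i_1,\dots,i_r\},\\ (-1)^{r-s}e_{i_1}\wedge\dots\wedge\widehat{e_{i_s}}\wedge\dots\wedge e_{i_r}y(\lambda'+e_j),& i=i_s,\end{cases}$$ for all $i\in\{1,\dots,m\}$, $j\in\{1,\dots,n\}$ and nonzero $e_{i_1}\wedge\dots\wedge e_{i_r}y(\lambda')\in M(\lambda)$.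
   Context: $\mathfrak{gl}(m,n)$ has basis of matrix units $E_{a,b}$, $1\le a,b\le m+n$; even part $\mathfrak{gl}(m,n)_0$ spanned by $E_{a,b}$ with $a,b\le m$ or $a,b>m$, odd part by $E_{i,m+j},E_{m+j,i}$ ($i\le m$, $j\le n$); $\mathfrak{gl}(m,n)_0=\mathfrak{gl}_m\oplus\mathfrak{gl}_n$, with $\mathfrak{gl}_m=\mathrm{span}\{E_{i,k}:i,k\le m\}$ and $\mathfrak{gl}_n$ identified with $\mathrm{span}\{E_{m+l,m+j}\}$ via $E_{l,j}\mapsto E_{m+l,m+j}$. Modules are $\mathbb{Z}_2$-graded. $\Lambda(\mathbb{C}^m)=\bigoplus_{r=0}^m\Lambda^r(\mathbb{C}^m)$ with $e_1,\dots,e_m$ the standard basis of $\mathbb{C}^m$ and $\mathfrak{gl}_m$ acting naturally ($E_{i,k}e_s=\delta_{k,s}e_i$, extended as a derivation of $\wedge$; trivially on $\Lambda^0=\mathbb{C}$). For $\lambda\in\mathbb{C}^n$: $e_1,\dots,e_n$ also denotes the standard basis of $\mathbb{Z}^n$, $|\mu|=\sum_j\mu_j$; $S(\lambda)=X_1\times\dots\times X_n$ with $X_j=\lambda_j+\mathbb{Z}$ if $\lambda_j\notin\mathbb{Z}$, $X_j=\mathbb{Z}_{\ge0}$ if $\lambda_j\in\mathbb{Z}_{\ge0}$, $X_j=\{-1,-2,\dots\}$ if $\lambda_j\in\{-1,-2,\dots\}$; $W(\lambda)$ has basis $\{y(\lambda'):\lambda'\in S(\lambda)\}$, with $y(\mu)=0$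 for $\mu\notin S(\lambda)$, and $\mathfrak{gl}_n$ acts by $E_{l,j}y(\lambda')=\lambda'_jy(\lambda'-e_j+e_l)$. $M(\lambda)=\Lambda(\mathbb{C}^m)\otimes W(\lambda)$ (as a $\mathfrak{gl}_m\oplus\mathfrak{gl}_n$-module), spanned by elements $e_{i_1}\wedge\dots\wedge e_{i_r}y(\lambda')$ ($\otimes$ omitted; $r=0$ gives $y(\lambda')$), with $\mathbb{Z}_2$-grading: $M(\lambda)_{\bar i}$ is spanned by those $e_{i_1}\wedge\dots\wedge e_{i_r}y(\lambda')$ with $|\lambda-\lambda'|\equiv i\pmod 2$. *)

theory Defs
  imports Complex_Main
begin

(* Basis of M(lambda): pairs (S, mu) where S \<subseteq> {1..m} encodes the sorted wedge
   e_{i_1} \<and> ... \<and> e_{i_r} (i_1 < ... < i_r, S = {i_1,...,i_r}) and mu \<in> S(lambda).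
   Vectors of C^n / Z^n are functions nat \<Rightarrow> complex indexed by 1..n. *)
type_synonym mbasis = "nat set \<times> (nat \<Rightarrow> complex)"
type_synonym mvec = "mbasis \<Rightarrow> complex"

(* mu \<in> S(lambda); coordinates outside 1..n are normalised to 0 *)
definition inSl :: "nat \<Rightarrow> (nat \<Rightarrow> complex) \<Rightarrow> (nat \<Rightarrow> complex) \<Rightarrow> bool" where
  "inSl n lam mu \<longleftrightarrow> (\<forall>j. j \<notin> {1..n} \<longrightarrow> mu j = 0) \<and>
     (\<forall>j\<in>{1..n}.
        (lam j \<notin> \<int> \<longrightarrow> mu j - lam j \<in> \<int>) \<and>
        (lam j \<in> \<nat> \<longrightarrow> mu j \<in> \<nat>) \<and>
        (lam j \<in> \<int> \<and> lam j \<notin> \<nat> \<longrightarrow> - mu j \<in> \<nat> \<and> mu j \<noteq> 0))"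

definition Mbasis :: "nat \<Rightarrow> nat \<Rightarrow> (nat \<Rightarrow> complex) \<Rightarrow> mbasis set" where
  "Mbasis m n lam = {(S, mu). S \<subseteq> {1..m} \<and> inSl n lam mu}"

definition Mspace :: "nat \<Rightarrow> nat \<Rightarrow> (nat \<Rightarrow> complex) \<Rightarrow> mvec set" where
  "Mspace m n lam = {v. finite {b. v b \<noteq> 0} \<and> (\<forall>b. v b \<noteq> 0 \<longrightarrow> b \<in> Mbasis m n lam)}"

definition inversions :: "nat list \<Rightarrow> nat" where
  "inversions xs = card {(p, q). p < q \<and> q < length xs \<and> xs ! q < xs ! p}"

(* the element e_{x_1} \<and> ... \<and> e_{x_r} y(mu) of M(lambda) for an arbitrary list xs
   (zero if xs has repetitions, or mu \<notin> S(lambda)) *)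
definition gen :: "nat \<Rightarrow> nat \<Rightarrow> (nat \<Rightarrow> complex) \<Rightarrow> nat list \<Rightarrow> (nat \<Rightarrow> complex) \<Rightarrow> mvec" where
  "gen m n lam xs mu =
     (if distinct xs \<and> set xs \<subseteq> {1..m} \<and> inSl n lam mu
      then (\<lambda>b. if b = (set xs, mu) then (-1) ^ inversions xs else 0)
      else (\<lambda>_. 0))"

definition shift :: "(nat \<Rightarrow> complex) \<Rightarrow> nat \<Rightarrow> complex \<Rightarrow> (nat \<Rightarrow> complex)" where
  "shift mu j d = mu(j := mu j + d)"

definition basis_act :: "nat \<Rightarrow> nat \<Rightarrow> (nat \<Rightarrow> complex) \<Rightarrow> nat \<Rightarrow> nat \<Rightarrow> mbasis \<Rightarrow> mvec" where
  "basis_act m n lam a b c =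
     (let xs = sorted_list_of_set (fst c); mu = snd c; r = length xs in
      if a \<le> m \<and> b \<le> m then
        (\<lambda>d. \<Sum>s<r. if xs ! s = b then gen m n lam (xs[s := a]) mu d else 0)
      else if m < a \<and> m < b then
        (\<lambda>d. mu (b - m) * gen m n lam xs (shift (shift mu (b - m) (-1)) (a - m) 1) d)
      else if a \<le> m then
        (\<lambda>d. (-1) ^ r * mu (b - m) * gen m n lam (a # xs) (shift mu (b - m) (-1)) d)
      else
        (\<lambda>d. \<Sum>p<r. if xs ! p = b then
               (-1) ^ (r - Suc p) * gen m n lam (take p xs @ drop (Suc p) xs) (shift mu (a - m) 1) d
             else 0))"

definition actM :: "nat \<Rightarrow> nat \<Rightarrow> (nat \<Rightarrow> complex) \<Rightarrow> nat \<Rightarrow> nat \<Rightarrow> mvec \<Rightarrow> mvec" where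
  "actM m n lam a b v = (\<lambda>d. \<Sum>c\<in>{c. v c \<noteq> 0}. v c * basis_act m n lam a b c d)"

definition glmn :: "nat \<Rightarrow> nat \<Rightarrow> (nat \<Rightarrow> nat \<Rightarrow> complex) set" where
  "glmn m n = {X. \<forall>a b. X a b \<noteq> 0 \<longrightarrow> a \<in> {1..m+n} \<and> b \<in> {1..m+n}}"

definition Eunit :: "nat \<Rightarrow> nat \<Rightarrow> (nat \<Rightarrow> nat \<Rightarrow> complex)" where
  "Eunit a b = (\<lambda>c d. if c = a \<and> d = b then 1 else 0)"

(* parity of an index: True = odd block *)
definition par :: "nat \<Rightarrow> nat \<Rightarrow> bool" where
  "par m a \<longleftrightarrow> m < a"

definition homog :: "nat \<Rightarrow> (nat \<Rightarrow> nat \<Rightarrow> complex) \<Rightarrow> bool \<Rightarrow> bool" where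
  "homog m X p \<longleftrightarrow> (\<forall>a b. X a b \<noteq> 0 \<longrightarrow> (par m a \<noteq> par m b) = p)"

definition mmul :: "nat \<Rightarrow> (nat \<Rightarrow> nat \<Rightarrow> complex) \<Rightarrow> (nat \<Rightarrow> nat \<Rightarrow> complex) \<Rightarrow> (nat \<Rightarrow> nat \<Rightarrow> complex)" where
  "mmul N X Y = (\<lambda>a c. \<Sum>b\<in>{1..N}. X a b * Y b c)"

definition psign :: "bool \<Rightarrow> bool \<Rightarrow> complex" where
  "psign p q = (if p \<and> q then -1 else 1)"

definition sbracket :: "nat \<Rightarrow> bool \<Rightarrow> bool \<Rightarrow> (nat \<Rightarrow> nat \<Rightarrow> complex) \<Rightarrow> (nat \<Rightarrow> nat \<Rightarrow> complex) \<Rightarrow> (nat \<Rightarrow> nat \<Rightarrow> complex)" where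
  "sbracket N p q X Y = (\<lambda>a c. mmul N X Y a c - psign p q * mmul N Y X a c)"

definition rho :: "nat \<Rightarrow> nat \<Rightarrow> (nat \<Rightarrow> complex) \<Rightarrow> (nat \<Rightarrow> nat \<Rightarrow> complex) \<Rightarrow> mvec \<Rightarrow> mvec" where
  "rho m n lam X v = (\<lambda>d. \<Sum>a\<in>{1..m+n}. \<Sum>b\<in>{1..m+n}. X a b * actM m n lam a b v d)"

definition Mhom :: "nat \<Rightarrow> (nat \<Rightarrow> complex) \<Rightarrow> mvec \<Rightarrow> bool \<Rightarrow> bool" where
  "Mhom n lam v p \<longleftrightarrow> (\<forall>b. v b \<noteq> 0 \<longrightarrow>
      (\<exists>k::int. (\<Sum>j=1..n. lam j - snd b j) = of_int k \<and> odd k = p))"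

end

theory Submission
  imports Defs "HOL-Library.Indicator_Function"
begin

text \<open>\<open>M(\<lambda>)\<close> is an oscillator module. Read \<open>e\<^sub>T y(\<mu>)\<close> as the monomial
  \<open>e\<^sub>T x\<^sup>\<mu>\<close> in Grassmann variables \<open>e\<^sub>1 \<dots> e\<^sub>m\<close> and commuting variables
  \<open>x\<^sub>1 \<dots> x\<^sub>n\<close>, with exponents truncated to \<open>S(\<lambda>)\<close>. Let \<open>z\<^sub>a\<close> be multiplication by the
  \<open>a\<close>-th variable and \<open>\<partial>\<^sub>a\<close> the derivative with respect to it, both acting from the
  right. The prescribed action of
  \<open>E\<^sub>a\<^sub>,\<^sub>b\<close> on basis vectors is exactly \<open>z\<^sub>a \<partial>\<^sub>b\<close>, and these operators satisfy the
  canonical super-commutation relations \<open>[\<partial>\<^sub>b, z\<^sub>c] = \<delta>\<^sub>b\<^sub>c\<close> (all other pairs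
  supercommute), from which the \<open>gl(m,n)\<close> relations for \<open>z\<^sub>a \<partial>\<^sub>b\<close> follow. The
  truncation is harmless because the coefficient \<open>\<nu>\<^sub>j\<close> or \<open>\<nu>\<^sub>j + 1\<close> vanishes exactly
  where a shift would leave \<open>S(\<lambda>)\<close>. Finally \<open>z\<^sub>a \<partial>\<^sub>b\<close> changes \<open>|\<lambda> - \<mu>|\<close> by an odd
  amount exactly when \<open>E\<^sub>a\<^sub>,\<^sub>b\<close> is odd, which gives the grading.\<close>

section \<open>Signs in the exterior algebra\<close>

definition wedge_sign :: "nat set \<Rightarrow> nat \<Rightarrow> 'a::comm_ring_1" where
  "wedge_sign U i = (-1) ^ card {x\<in>U. i < x}"

lemma wedge_sign_insert:
  "finite U \<Longrightarrow> x \<notin> U \<Longrightarrow> wedge_sign (insert x U) i = (if i < x then -1 else 1) * wedge_sign U i"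
proof -
  assume "finite U" "x \<notin> U"
  moreover have "{y\<in>insert x U. i < y} = (if i < x then insert x {y\<in>U. i < y} else {y\<in>U. i < y})"
    by auto
  ultimately show ?thesis
    by (simp add: wedge_sign_def)
qed

lemma wedge_sign_square [simp]: "wedge_sign U i * wedge_sign U i = 1"
  unfolding wedge_sign_def power_mult_distrib[symmetric] by simp

lemma wedge_sign_square_left [simp]: "wedge_sign U i * (wedge_sign U i * x) = x"
  by (simp flip: mult.assoc)

lemma inversions_Cons: "inversions (x # xs) = length (filter (\<lambda>y. y < x) xs) + inversions xs"
proof -
  let ?P = "{(p, q). p < q \<and> q < length xs \<and> xs ! q < xs ! p}"
  let ?A = "(\<lambda>q. (0::nat, Suc q)) ` {q. q < length xs \<and> xs ! q < x}"
  let ?B = "(\<lambda>(p, q). (Suc p, Suc q)) ` ?P"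
  have split: "{(p, q). p < q \<and> q < length (x # xs) \<and> (x # xs) ! q < (x # xs) ! p} = ?A \<union> ?B"
  proof (rule set_eqI, clarify)
    fix p q
    show "((p, q) \<in> {(p, q). p < q \<and> q < length (x # xs) \<and> (x # xs) ! q < (x # xs) ! p}) = ((p, q) \<in> ?A \<union> ?B)"
      by (cases p; cases q) (auto simp: image_iff)
  qed
  have "finite ?P"
    by (rule finite_subset[of _ "{..<length xs} \<times> {..<length xs}"]) auto
  then have "card (?A \<union> ?B) = card ?A + card ?B"
    by (intro card_Un_disjoint) auto
  moreover have "card ?A = card {q. q < length xs \<and> xs ! q < x}"
    by (rule card_image) (auto simp: inj_on_def)
  moreover have "card ?B = card ?P"
    by (rule card_image) (auto simp: inj_on_def)
  ultimately show ?thesis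
    unfolding inversions_def split by (simp add: length_filter_conv_card)
qed

lemma inversions_insert:
  "inversions (as @ x # bs) =
     inversions (as @ bs) + length (filter (\<lambda>a. x < a) as) + length (filter (\<lambda>b. b < x) bs)"
  by (induction as) (auto simp: inversions_Cons)

text \<open>\<open>e_as \<and> e_x \<and> e_bs = (-1)^|bs| e_as \<and> e_bs \<and> e_x\<close>, and moving \<open>e_x\<close> from the end
  to its sorted position costs \<open>wedge_sign\<close>.\<close>
lemma sign_inversions_insert:
  assumes "distinct (as @ x # bs)"
  shows "(-1::'a::comm_ring_1) ^ inversions (as @ x # bs) =
    (-1) ^ (inversions (as @ bs) + length bs) * wedge_sign (set (as @ bs)) x"
proof -
  have "length (filter (\<lambda>b. b < x) bs) + length (filter (\<lambda>b. x < b) bs) = length bs"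
    using assms by (induction bs) auto
  moreover have "card {y \<in> set (as @ bs). x < y} = length (filter (\<lambda>y. x < y) (as @ bs))"
    using assms distinct_length_filter[of "as @ bs" "\<lambda>y. x < y"] by (simp add: Int_def conj_commute)
  ultimately have "inversions (as @ x # bs) + 2 * length (filter (\<lambda>b. x < b) bs) =
      inversions (as @ bs) + length bs + card {y \<in> set (as @ bs). x < y}"
    by (simp add: inversions_insert)
  then have "(-1::'a) ^ (inversions (as @ x # bs) + 2 * length (filter (\<lambda>b. x < b) bs)) =
      (-1) ^ (inversions (as @ bs) + length bs + card {y \<in> set (as @ bs). x < y})"
    by (simp only:)
  then show ?thesis
    by (simp add: power_add power_mult wedge_sign_def)
qed

lemma inversions_sorted:
  assumes "sorted xs"
  shows "inversions xs = 0"
proof -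
  have "{(p, q). p < q \<and> q < length xs \<and> xs ! q < xs ! p} = {}"
    using sorted_nth_mono[OF assms] by (auto simp: leD)
  then show ?thesis
    unfolding inversions_def by (metis card.empty)
qed

section \<open>The index set \<open>S(\<lambda>)\<close>\<close>

definition weight_range :: "complex \<Rightarrow> complex set" where
  "weight_range l =
     (if l \<notin> \<int> then {z. z - l \<in> \<int>} else if l \<in> \<nat> then \<nat> else {z. - z \<in> \<nat> \<and> z \<noteq> 0})"

lemma inSl_iff:
  "inSl n lam mu \<longleftrightarrow> (\<forall>j. j \<notin> {1..n} \<longrightarrow> mu j = 0) \<and> (\<forall>j\<in>{1..n}. mu j \<in> weight_range (lam j))"
  using Nats_subset_Ints by (auto simp: inSl_def weight_range_def)

lemma Nats_pred:
  assumes "(z::'a::ring_1) \<in> \<nat>" "z \<noteq> 0"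
  shows "z - 1 \<in> \<nat>"
proof -
  obtain k where "z = of_nat (Suc k)"
    using assms by (metis Nats_cases not0_implies_Suc of_nat_0)
  then show ?thesis
    by simp
qed

lemma weight_range_cases:
  assumes "z \<in> weight_range l"
  obtains "l \<notin> \<int>" "z - l \<in> \<int>" | "l \<in> \<nat>" "z \<in> \<nat>" | k where "l \<in> \<int>" "l \<notin> \<nat>" "z = - of_nat (Suc k)"
proof -
  have "- z \<in> \<nat> \<Longrightarrow> z \<noteq> 0 \<Longrightarrow> \<exists>k. z = - of_nat (Suc k)"
    by (metis Nats_cases add.inverse_neutral minus_minus not0_implies_Suc of_nat_0)
  then show ?thesis
    using assms that Nats_subset_Ints by (auto simp: weight_range_def split: if_splits)
qed

lemma weight_range_pred:
  assumes "z \<in> weight_range l" "z \<noteq> 0"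
  shows "z - 1 \<in> weight_range l"
  using assms(1)
proof (cases rule: weight_range_cases)
  case 1
  then have "(z - l) - 1 \<in> \<int>"
    by simp
  with 1 show ?thesis
    by (simp add: weight_range_def diff_right_commute)
next
  case 2
  with assms(2) show ?thesis
    using Nats_subset_Ints by (auto simp: weight_range_def Nats_pred)
next
  case (3 k)
  then have "z - 1 = - of_nat (Suc (Suc k))"
    by simp
  with 3 show ?thesis
    by (simp add: weight_range_def del: of_nat_Suc)
qed

lemma weight_range_succ:
  assumes "z \<in> weight_range l" "z + 1 \<noteq> 0"
  shows "z + 1 \<in> weight_range l"
  using assms(1)
proof (cases rule: weight_range_cases)
  case 1
  then have "(z - l) + 1 \<in> \<int>"
    by simp
  with 1 show ?thesis
    by (simp add: weight_range_def diff_add_eq)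
next
  case 2
  then show ?thesis
    using Nats_subset_Ints by (auto simp: weight_range_def)
next
  case (3 k)
  with assms(2) obtain k' where "k = Suc k'"
    using not0_implies_Suc by fastforce
  with 3 have "z + 1 = - of_nat (Suc k')"
    by simp
  with 3 show ?thesis
    by (simp add: weight_range_def del: of_nat_Suc)
qed

lemma shift_apply: "shift \<nu> j a l = (if l = j then \<nu> j + a else \<nu> l)"
  by (simp add: shift_def)

lemma shift_shift_same [simp]: "shift (shift \<nu> j a) j b = shift \<nu> j (a + b)"
  by (simp add: shift_def add.assoc)

lemma shift_zero [simp]: "shift \<nu> j 0 = \<nu>"
  by (simp add: shift_def)

lemma shift_commute: "shift (shift \<nu> j a) l b = shift (shift \<nu> l b) j a"
  by (auto simp: shift_def fun_eq_iff)

lemma shift_eq_iff: "shift \<nu> j a = \<mu> \<longleftrightarrow> \<nu> = shift \<mu> j (- a)"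
  by (auto simp: shift_def fun_eq_iff) (metis add_diff_cancel diff_conv_add_uminus fun_upd_apply)+

lemma inSl_shift:
  "inSl n lam \<mu> \<Longrightarrow> j \<in> {1..n} \<Longrightarrow> inSl n lam (shift \<mu> j d) \<longleftrightarrow> \<mu> j + d \<in> weight_range (lam j)"
  by (auto simp: inSl_iff shift_apply)

lemma inSl_shift_pred:
  assumes "inSl n lam \<mu>" "j \<in> {1..n}" "\<mu> j \<noteq> 0"
  shows "inSl n lam (shift \<mu> j (-1))"
  using assms weight_range_pred[of "\<mu> j" "lam j"] by (simp add: inSl_shift) (simp add: inSl_iff)

lemma inSl_shift_succ:
  assumes "inSl n lam \<mu>" "j \<in> {1..n}" "\<mu> j + 1 \<noteq> 0"
  shows "inSl n lam (shift \<mu> j 1)"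
  using assms weight_range_succ[of "\<mu> j" "lam j"] by (simp add: inSl_shift) (simp add: inSl_iff)

lemma inSl_shift_shift:
  assumes "inSl n lam \<nu>" "inSl n lam (shift (shift \<nu> l a) j b)" "l \<noteq> j"
  shows "inSl n lam (shift \<nu> l a)" "inSl n lam (shift \<nu> j b)"
  using assms by (auto simp: inSl_iff shift_apply split: if_splits)

section \<open>Grassmann and Weyl operators\<close>

text \<open>In coordinates with respect to the sorted wedges \<open>e\<^sub>T\<close>: right multiplication
  \<open>v \<mapsto> v \<and> e\<^sub>i\<close> and the right derivative \<open>\<partial>/\<partial>e\<^sub>k\<close>. The sign counts the factors that
  \<open>e\<^sub>i\<close> passes on its way from the end to its sorted position.\<close>

definition wedge :: "nat \<Rightarrow> (nat set \<times> 'b \<Rightarrow> 'a::comm_ring_1) \<Rightarrow> nat set \<times> 'b \<Rightarrow> 'a" where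
  "wedge i v = (\<lambda>(T, \<nu>). if i \<in> T \<and> finite T then wedge_sign (T - {i}) i * v (T - {i}, \<nu>) else 0)"

definition contract :: "nat \<Rightarrow> (nat set \<times> 'b \<Rightarrow> 'a::comm_ring_1) \<Rightarrow> nat set \<times> 'b \<Rightarrow> 'a" where
  "contract k v = (\<lambda>(T, \<nu>). if k \<notin> T \<and> finite T then wedge_sign T k * v (insert k T, \<nu>) else 0)"

text \<open>Multiplication by \<open>x\<^sub>j\<close> and \<open>\<partial>/\<partial>x\<^sub>j\<close> on the monomials \<open>x\<^sup>\<mu> = y(\<mu>)\<close>, truncated
  to \<open>S(\<lambda>)\<close>.\<close>

definition xmul :: "nat \<Rightarrow> (nat \<Rightarrow> complex) \<Rightarrow> nat \<Rightarrow> ('t \<times> (nat \<Rightarrow> complex) \<Rightarrow> complex) \<Rightarrow>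
    't \<times> (nat \<Rightarrow> complex) \<Rightarrow> complex" where
  "xmul n lam j v = (\<lambda>(T, \<nu>). if inSl n lam \<nu> then v (T, shift \<nu> j (-1)) else 0)"

definition xder :: "nat \<Rightarrow> (nat \<Rightarrow> complex) \<Rightarrow> nat \<Rightarrow> ('t \<times> (nat \<Rightarrow> complex) \<Rightarrow> complex) \<Rightarrow>
    't \<times> (nat \<Rightarrow> complex) \<Rightarrow> complex" where
  "xder n lam j v = (\<lambda>(T, \<nu>). if inSl n lam \<nu> then (\<nu> j + 1) * v (T, shift \<nu> j 1) else 0)"

lemma wedge_apply [simp]:
  "wedge i v (T, \<nu>) = (if i \<in> T \<and> finite T then wedge_sign (T - {i}) i * v (T - {i}, \<nu>) else 0)"
  by (simp add: wedge_def)

lemma contract_apply [simp]: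
  "contract k v (T, \<nu>) = (if k \<notin> T \<and> finite T then wedge_sign T k * v (insert k T, \<nu>) else 0)"
  by (simp add: contract_def)

lemma xmul_apply [simp]:
  "xmul n lam j v (T, \<nu>) = (if inSl n lam \<nu> then v (T, shift \<nu> j (-1)) else 0)"
  by (simp add: xmul_def)

lemma xder_apply [simp]:
  "xder n lam j v (T, \<nu>) = (if inSl n lam \<nu> then (\<nu> j + 1) * v (T, shift \<nu> j 1) else 0)"
  by (simp add: xder_def)

lemma wedge_anticommute: "wedge i (wedge k v) = (\<lambda>d. - wedge k (wedge i v) d)"
proof (rule ext, clarify)
  fix T \<nu>
  show "wedge i (wedge k v) (T, \<nu>) = - wedge k (wedge i v) (T, \<nu>)"
  proof (cases "i \<noteq> k \<and> i \<in> T \<and> k \<in> T \<and> finite T")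
    case True
    define U where "U = T - {i} - {k}"
    have "T - {i} = insert k U" "T - {k} = insert i U" "T - {k} - {i} = U" "finite U" "i \<notin> U" "k \<notin> U"
      using True by (auto simp: U_def)
    with True show ?thesis
      by (simp add: U_def[symmetric] wedge_sign_insert)
  qed auto
qed

lemma contract_anticommute: "contract i (contract k v) = (\<lambda>d. - contract k (contract i v) d)"
proof (rule ext, clarify)
  fix T \<nu>
  show "contract i (contract k v) (T, \<nu>) = - contract k (contract i v) (T, \<nu>)"
  proof (cases "i \<noteq> k \<and> i \<notin> T \<and> k \<notin> T \<and> finite T")
    case True
    then show ?thesis
      by (simp add: wedge_sign_insert insert_commute)
  qed auto
qed

lemma contract_wedge:
  assumes "\<And>T \<nu>. v (T, \<nu>) \<noteq> 0 \<Longrightarrow> finite T"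
  shows "contract k (wedge i v) = (\<lambda>d. (if i = k then v d else 0) - wedge i (contract k v) d)"
proof (rule ext, clarify)
  fix T \<nu>
  show "contract k (wedge i v) (T, \<nu>) = (if i = k then v (T, \<nu>) else 0) - wedge i (contract k v) (T, \<nu>)"
  proof (cases "i = k")
    case True
    then show ?thesis
      using assms[of T \<nu>] by (auto simp: insert_absorb)
  next
    case False
    show ?thesis
    proof (cases "i \<in> T \<and> k \<notin> T \<and> finite T")
      case True
      define U where "U = T - {i}"
      have "T = insert i U" "insert k T - {i} = insert k U" "finite U" "i \<notin> U" "k \<notin> U"
        using True \<open>i \<noteq> k\<close> by (auto simp: U_def)
      with True \<open>i \<noteq> k\<close> show ?thesis
        by (simp add: U_def[symmetric] wedge_sign_insert insert_commute)
    qed (use \<open>i \<noteq> k\<close> in auto)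
  qed
qed

lemma xmul_commute:
  assumes "\<And>T \<nu>. v (T, \<nu>) \<noteq> 0 \<Longrightarrow> inSl n lam \<nu>"
  shows "xmul n lam l (xmul n lam j v) = xmul n lam j (xmul n lam l v)"
proof (rule ext, clarify)
  fix T \<nu>
  show "xmul n lam l (xmul n lam j v) (T, \<nu>) = xmul n lam j (xmul n lam l v) (T, \<nu>)"
  proof (cases "l \<noteq> j \<and> inSl n lam \<nu> \<and> v (T, shift (shift \<nu> l (-1)) j (-1)) \<noteq> 0")
    case True
    then show ?thesis
      using inSl_shift_shift[of n lam \<nu> l "-1" j "-1"] assms by (auto simp: shift_commute)
  qed (auto simp: shift_commute)
qed

lemma xder_commute:
  assumes "\<And>T \<nu>. v (T, \<nu>) \<noteq> 0 \<Longrightarrow> inSl n lam \<nu>"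
  shows "xder n lam l (xder n lam j v) = xder n lam j (xder n lam l v)"
proof (rule ext, clarify)
  fix T \<nu>
  show "xder n lam l (xder n lam j v) (T, \<nu>) = xder n lam j (xder n lam l v) (T, \<nu>)"
  proof (cases "l \<noteq> j \<and> inSl n lam \<nu> \<and> v (T, shift (shift \<nu> l 1) j 1) \<noteq> 0")
    case True
    then show ?thesis
      using inSl_shift_shift[of n lam \<nu> l 1 j 1] assms by (auto simp: shift_commute shift_apply)
  qed (auto simp: shift_commute)
qed

lemma xder_xmul:
  assumes supp: "\<And>T \<nu>. v (T, \<nu>) \<noteq> 0 \<Longrightarrow> inSl n lam \<nu>" and j: "j \<in> {1..n}"
  shows "xder n lam j (xmul n lam l v) = (\<lambda>d. (if j = l then v d else 0) + xmul n lam l (xder n lam j v) d)"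
proof (rule ext, clarify)
  fix T \<nu>
  show "xder n lam j (xmul n lam l v) (T, \<nu>) = (if j = l then v (T, \<nu>) else 0) + xmul n lam l (xder n lam j v) (T, \<nu>)"
  proof (cases "j = l")
    case True
    show ?thesis
    proof (cases "inSl n lam \<nu>")
      case \<nu>: True
      have "xder n lam j (xmul n lam l v) (T, \<nu>) = (\<nu> j + 1) * v (T, \<nu>)"
        using \<nu> True inSl_shift_succ[OF \<nu> j] by auto
      moreover have "xmul n lam l (xder n lam j v) (T, \<nu>) = \<nu> j * v (T, \<nu>)"
        using \<nu> True inSl_shift_pred[OF \<nu> j] by (auto simp: shift_apply)
      ultimately show ?thesis
        using True by (simp add: algebra_simps)
    qed (use True supp in auto)
  next
    case False
    show ?thesis
    proof (cases "inSl n lam \<nu> \<and> v (T, shift (shift \<nu> j 1) l (-1)) \<noteq> 0")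
      case True
      then show ?thesis
        using inSl_shift_shift[of n lam \<nu> j 1 l "-1"] supp False by (auto simp: shift_commute shift_apply)
    qed (use False in \<open>auto simp: shift_commute\<close>)
  qed
qed

lemma wedge_xmul_commute: "wedge i (xmul n lam j v) = xmul n lam j (wedge i v)"
  by (rule ext, clarify) simp

lemma wedge_xder_commute: "wedge i (xder n lam j v) = xder n lam j (wedge i v)"
  by (rule ext, clarify) simp

lemma contract_xmul_commute: "contract i (xmul n lam j v) = xmul n lam j (contract i v)"
  by (rule ext, clarify) simp

lemma contract_xder_commute: "contract i (xder n lam j v) = xder n lam j (contract i v)"
  by (rule ext, clarify) simp

text \<open>Operators whose matrix has at most one nonzero entry in each row and each column.\<close>

definition monomial_op :: "(('a \<Rightarrow> 'c) \<Rightarrow> 'b \<Rightarrow> 'c::comm_ring_1) \<Rightarrow> bool" where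
  "monomial_op F \<longleftrightarrow> (\<exists>w g. inj_on g {d. w d \<noteq> 0} \<and> (\<forall>v d. F v d = w d * v (g d)))"

lemma monomial_opI:
  "inj_on g {d. w d \<noteq> 0} \<Longrightarrow> (\<And>v d. F v d = w d * v (g d)) \<Longrightarrow> monomial_op F"
  unfolding monomial_op_def by blast

lemma monomial_op_sum: "monomial_op F \<Longrightarrow> F (\<lambda>x. \<Sum>c\<in>C. f c x) = (\<lambda>x. \<Sum>c\<in>C. F (f c) x)"
  unfolding monomial_op_def by (auto simp: sum_distrib_left)

lemma monomial_op_zero: "monomial_op F \<Longrightarrow> F (\<lambda>_. 0) = (\<lambda>_. 0)"
  unfolding monomial_op_def by auto

lemma monomial_op_add: "monomial_op F \<Longrightarrow> F (\<lambda>x. f x + g x) = (\<lambda>x. F f x + F g x)"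
  unfolding monomial_op_def by (auto simp: algebra_simps)

lemma monomial_op_scale: "monomial_op F \<Longrightarrow> F (\<lambda>x. \<alpha> * f x) = (\<lambda>x. \<alpha> * F f x)"
  unfolding monomial_op_def by (auto simp: algebra_simps)

lemma monomial_op_comp:
  assumes "monomial_op F" "monomial_op G"
  shows "monomial_op (\<lambda>v. F (G v))"
proof -
  obtain w g where F: "inj_on g {d. w d \<noteq> 0}" "\<And>v d. F v d = w d * v (g d)"
    using assms(1) unfolding monomial_op_def by blast
  obtain w' g' where G: "inj_on g' {d. w' d \<noteq> 0}" "\<And>v d. G v d = w' d * v (g' d)"
    using assms(2) unfolding monomial_op_def by blast
  have "w d \<noteq> 0 \<and> w' (g d) \<noteq> 0" if "w d * w' (g d) \<noteq> 0" for d
    using that by auto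
  then have "inj_on (\<lambda>d. g' (g d)) {d. w d * w' (g d) \<noteq> 0}"
    using F(1) G(1) unfolding inj_on_def by blast
  then show ?thesis
    by (rule monomial_opI) (simp add: F G mult.assoc)
qed

lemma monomial_op_finite_support:
  assumes "monomial_op F" "finite {d. v d \<noteq> 0}"
  shows "finite {d. F v d \<noteq> 0}"
proof -
  obtain w g where F: "inj_on g {d. w d \<noteq> 0}" "\<And>v d. F v d = w d * v (g d)"
    using assms(1) unfolding monomial_op_def by blast
  have "{d. F v d \<noteq> 0} \<subseteq> g -` {d. v d \<noteq> 0} \<inter> {d. w d \<noteq> 0}"
    by (auto simp: F(2))
  moreover have "finite (g -` {d. v d \<noteq> 0} \<inter> {d. w d \<noteq> 0})"
    using assms(2) F(1) by (rule finite_vimage_IntI)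
  ultimately show ?thesis
    by (rule finite_subset)
qed

lemma monomial_op_wedge: "monomial_op (wedge i)"
proof (rule monomial_opI)
  have "inj_on (\<lambda>(T, \<nu>). (T - {i}, \<nu>)) {(T, \<nu>). i \<in> T}"
    by (rule inj_onI) (clarsimp, metis insert_Diff)
  then show "inj_on (\<lambda>(T, \<nu>). (T - {i}, \<nu>))
      {d. (\<lambda>(T, \<nu>). if i \<in> T \<and> finite T then wedge_sign (T - {i}) i else 0) d \<noteq> 0}"
    by (rule inj_on_subset) (auto split: if_splits)
qed (auto simp: wedge_def split: prod.split)

lemma monomial_op_contract: "monomial_op (contract k)"
proof (rule monomial_opI)
  have "inj_on (\<lambda>(T, \<nu>). (insert k T, \<nu>)) {(T, \<nu>). k \<notin> T}"
    by (rule inj_onI) (clarsimp, metis Diff_insert_absorb)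
  then show "inj_on (\<lambda>(T, \<nu>). (insert k T, \<nu>))
      {d. (\<lambda>(T, \<nu>). if k \<notin> T \<and> finite T then wedge_sign T k else 0) d \<noteq> 0}"
    by (rule inj_on_subset) (auto split: if_splits)
qed (simp add: contract_def split: prod.split)

lemma monomial_op_xmul: "monomial_op (xmul n lam j)"
proof (rule monomial_opI)
  show "inj_on (\<lambda>(T, \<nu>). (T, shift \<nu> j (-1))) {d. (\<lambda>(T, \<nu>). if inSl n lam \<nu> then 1 else 0) d \<noteq> 0}"
    by (rule inj_onI) (clarsimp simp: shift_eq_iff)
qed (simp add: xmul_def split: prod.split)

lemma monomial_op_xder: "monomial_op (xder n lam j)"
proof (rule monomial_opI)
  show "inj_on (\<lambda>(T, \<nu>). (T, shift \<nu> j 1)) {d. (\<lambda>(T, \<nu>). if inSl n lam \<nu> then \<nu> j + 1 else 0) d \<noteq> 0}"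
    by (rule inj_onI) (clarsimp simp: shift_eq_iff)
qed (simp add: xder_def split: prod.split)

section \<open>The oscillator realisation\<close>

definition creation :: "nat \<Rightarrow> nat \<Rightarrow> (nat \<Rightarrow> complex) \<Rightarrow> nat \<Rightarrow> mvec \<Rightarrow> mvec" where
  "creation m n lam a = (if a \<le> m then wedge a else xmul n lam (a - m))"

definition annihilation :: "nat \<Rightarrow> nat \<Rightarrow> (nat \<Rightarrow> complex) \<Rightarrow> nat \<Rightarrow> mvec \<Rightarrow> mvec" where
  "annihilation m n lam a = (if a \<le> m then contract a else xder n lam (a - m))"

definition osc_act :: "nat \<Rightarrow> nat \<Rightarrow> (nat \<Rightarrow> complex) \<Rightarrow> nat \<Rightarrow> nat \<Rightarrow> mvec \<Rightarrow> mvec" where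
  "osc_act m n lam a b v = creation m n lam a (annihilation m n lam b v)"

definition fermion_sign :: "nat \<Rightarrow> nat \<Rightarrow> nat \<Rightarrow> complex" where
  "fermion_sign m a c = (if a \<le> m \<and> c \<le> m then -1 else 1)"

lemma monomial_op_creation: "monomial_op (creation m n lam a)"
  by (simp add: creation_def monomial_op_wedge monomial_op_xmul)

lemma monomial_op_annihilation: "monomial_op (annihilation m n lam a)"
  by (simp add: annihilation_def monomial_op_contract monomial_op_xder)

lemma monomial_op_osc_act: "monomial_op (osc_act m n lam a b)"
  unfolding osc_act_def[abs_def] by (rule monomial_op_comp[OF monomial_op_creation monomial_op_annihilation])

lemma Mspace_support:
  assumes "v \<in> Mspace m n lam" "v (T, \<nu>) \<noteq> 0"
  shows "T \<subseteq> {1..m}" "finite T" "inSl n lam \<nu>"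
proof -
  show T: "T \<subseteq> {1..m}" "inSl n lam \<nu>"
    using assms by (auto simp: Mspace_def Mbasis_def)
  show "finite T"
    using finite_subset[OF T(1)] by simp
qed

lemma Mspace_creation:
  assumes v: "v \<in> Mspace m n lam" and a: "a \<in> {1..m+n}"
  shows "creation m n lam a v \<in> Mspace m n lam"
  unfolding Mspace_def
proof (intro CollectI conjI allI impI)
  show "finite {d. creation m n lam a v d \<noteq> 0}"
    using v by (intro monomial_op_finite_support[OF monomial_op_creation]) (simp add: Mspace_def)
  fix d
  assume nz: "creation m n lam a v d \<noteq> 0"
  obtain T \<nu> where d: "d = (T, \<nu>)"
    by fastforce
  show "d \<in> Mbasis m n lam"
  proof (cases "a \<le> m")
    case True
    with nz d have "a \<in> T" "v (T - {a}, \<nu>) \<noteq> 0"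
      by (auto simp: creation_def split: if_splits)
    moreover have "T - {a} \<subseteq> {1..m}" "inSl n lam \<nu>"
      using Mspace_support[OF v calculation(2)] by auto
    ultimately show ?thesis
      using a True by (auto simp: d Mbasis_def)
  next
    case False
    with nz d have "inSl n lam \<nu>" "v (T, shift \<nu> (a - m) (-1)) \<noteq> 0"
      by (auto simp: creation_def split: if_splits)
    then show ?thesis
      using Mspace_support(1)[OF v] by (auto simp: d Mbasis_def)
  qed
qed

lemma Mspace_annihilation:
  assumes v: "v \<in> Mspace m n lam" and a: "a \<in> {1..m+n}"
  shows "annihilation m n lam a v \<in> Mspace m n lam"
  unfolding Mspace_def
proof (intro CollectI conjI allI impI)
  show "finite {d. annihilation m n lam a v d \<noteq> 0}"
    using v by (intro monomial_op_finite_support[OF monomial_op_annihilation]) (simp add: Mspace_def)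
  fix d
  assume nz: "annihilation m n lam a v d \<noteq> 0"
  obtain T \<nu> where d: "d = (T, \<nu>)"
    by fastforce
  show "d \<in> Mbasis m n lam"
  proof (cases "a \<le> m")
    case True
    with nz d have "v (insert a T, \<nu>) \<noteq> 0"
      by (auto simp: annihilation_def split: if_splits)
    then show ?thesis
      using Mspace_support[OF v] by (auto simp: d Mbasis_def)
  next
    case False
    with nz d have "inSl n lam \<nu>" "v (T, shift \<nu> (a - m) 1) \<noteq> 0"
      by (auto simp: annihilation_def split: if_splits)
    then show ?thesis
      using Mspace_support(1)[OF v] by (auto simp: d Mbasis_def)
  qed
qed

lemma Mspace_osc_act:
  "v \<in> Mspace m n lam \<Longrightarrow> a \<in> {1..m+n} \<Longrightarrow> b \<in> {1..m+n} \<Longrightarrow> osc_act m n lam a b v \<in> Mspace m n lam"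
  by (simp add: osc_act_def Mspace_creation Mspace_annihilation)

lemma creation_supercommute:
  "v \<in> Mspace m n lam \<Longrightarrow>
    creation m n lam a (creation m n lam c v) = (\<lambda>x. fermion_sign m a c * creation m n lam c (creation m n lam a v) x)"
  using wedge_anticommute[of a c v] xmul_commute[of v n lam "a - m" "c - m"] Mspace_support(3)[of v m n lam]
  by (auto simp: creation_def fermion_sign_def wedge_xmul_commute)

lemma annihilation_supercommute:
  "v \<in> Mspace m n lam \<Longrightarrow>
    annihilation m n lam a (annihilation m n lam c v) =
      (\<lambda>x. fermion_sign m a c * annihilation m n lam c (annihilation m n lam a v) x)"
  using contract_anticommute[of a c v] xder_commute[of v n lam "a - m" "c - m"] Mspace_support(3)[of v m n lam]
  by (auto simp: annihilation_def fermion_sign_def contract_xder_commute)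

lemma annihilation_creation:
  assumes v: "v \<in> Mspace m n lam" and b: "b \<in> {1..m+n}"
  shows "annihilation m n lam b (creation m n lam c v) =
    (\<lambda>x. (if b = c then v x else 0) + fermion_sign m b c * creation m n lam c (annihilation m n lam b v) x)"
proof (cases "b \<le> m"; cases "c \<le> m")
  assume "b \<le> m" "c \<le> m"
  then show ?thesis
    using contract_wedge[OF Mspace_support(2)[OF v], where k = b and i = c]
    by (simp add: annihilation_def creation_def fermion_sign_def eq_commute[of c b])
next
  assume "\<not> b \<le> m" "\<not> c \<le> m"
  moreover have "b - m \<in> {1..n}"
    using b \<open>\<not> b \<le> m\<close> by auto
  moreover have "b - m = c - m \<longleftrightarrow> b = c"
    using \<open>\<not> b \<le> m\<close> \<open>\<not> c \<le> m\<close> by auto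
  ultimately show ?thesis
    using xder_xmul[of v n lam "b - m" "c - m"] Mspace_support(3)[OF v]
    by (auto simp: annihilation_def creation_def fermion_sign_def)
qed (auto simp: annihilation_def creation_def fermion_sign_def contract_xmul_commute wedge_xder_commute)

lemma osc_act_osc_act:
  assumes v: "v \<in> Mspace m n lam" and b: "b \<in> {1..m+n}" and d: "d \<in> {1..m+n}"
  shows "osc_act m n lam c d (osc_act m n lam a b v) x =
    (if d = a then osc_act m n lam c b v x else 0) +
    fermion_sign m d a * creation m n lam c (creation m n lam a
      (annihilation m n lam d (annihilation m n lam b v))) x"
proof -
  have w: "annihilation m n lam b v \<in> Mspace m n lam"
    using v b by (rule Mspace_annihilation)
  have "osc_act m n lam c d (osc_act m n lam a b v) = creation m n lam c (\<lambda>x.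
      (if d = a then annihilation m n lam b v x else 0) +
      fermion_sign m d a * creation m n lam a (annihilation m n lam d (annihilation m n lam b v)) x)"
    unfolding osc_act_def by (simp only: annihilation_creation[OF w d])
  then show ?thesis
    by (cases "d = a")
      (simp_all add: osc_act_def monomial_op_add[OF monomial_op_creation]
        monomial_op_scale[OF monomial_op_creation] monomial_op_zero[OF monomial_op_creation])
qed

lemma osc_act_supercommutator:
  assumes v: "v \<in> Mspace m n lam"
    and a: "a \<in> {1..m+n}" and b: "b \<in> {1..m+n}" and c: "c \<in> {1..m+n}" and d: "d \<in> {1..m+n}"
  defines "s \<equiv> psign (par m a \<noteq> par m b) (par m c \<noteq> par m d)"
  shows "osc_act m n lam a b (osc_act m n lam c d v) x - s * osc_act m n lam c d (osc_act m n lam a b v) x =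
    (if b = c then osc_act m n lam a d v x else 0) - s * (if d = a then osc_act m n lam c b v x else 0)"
proof -
  define K where "K = creation m n lam c (creation m n lam a (annihilation m n lam d (annihilation m n lam b v))) x"
  have w: "annihilation m n lam d (annihilation m n lam b v) \<in> Mspace m n lam"
    using v b d by (simp add: Mspace_annihilation)
  have "creation m n lam a (creation m n lam c (annihilation m n lam b (annihilation m n lam d v))) =
      creation m n lam a (creation m n lam c
        (\<lambda>x. fermion_sign m b d * annihilation m n lam d (annihilation m n lam b v) x))"
    by (simp only: annihilation_supercommute[OF v, of b d])
  also have "\<dots> = (\<lambda>x. fermion_sign m b d * fermion_sign m a c *
      creation m n lam c (creation m n lam a (annihilation m n lam d (annihilation m n lam b v))) x)"
    by (simp add: monomial_op_scale[OF monomial_op_creation] creation_supercommute[OF w, of a c] mult.assoc)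
  finally have "creation m n lam a (creation m n lam c (annihilation m n lam b (annihilation m n lam d v))) x =
      fermion_sign m a c * fermion_sign m b d * K"
    by (simp add: K_def)
  then have ab_cd: "osc_act m n lam a b (osc_act m n lam c d v) x =
      (if b = c then osc_act m n lam a d v x else 0) + fermion_sign m b c * (fermion_sign m a c * fermion_sign m b d * K)"
    using osc_act_osc_act[OF v d b, of a c x] by simp
  have cd_ab: "osc_act m n lam c d (osc_act m n lam a b v) x =
      (if d = a then osc_act m n lam c b v x else 0) + fermion_sign m d a * K"
    using osc_act_osc_act[OF v b d, of c a x] by (simp add: K_def)
  have "fermion_sign m b c * (fermion_sign m a c * fermion_sign m b d) = s * fermion_sign m d a"
    unfolding s_def fermion_sign_def psign_def par_def
    by (cases "a \<le> m"; cases "b \<le> m"; cases "c \<le> m"; cases "d \<le> m") auto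
  then show ?thesis
    unfolding ab_cd cd_ab by (simp add: algebra_simps)
qed

section \<open>The action on basis vectors\<close>

lemma gen_apply:
  "gen m n lam ys \<mu> (T, \<nu>) =
    (if distinct ys \<and> set ys \<subseteq> {1..m} \<and> inSl n lam \<mu> \<and> T = set ys \<and> \<nu> = \<mu> then (-1) ^ inversions ys else 0)"
  by (auto simp: gen_def)

lemma sum_nth_eq_notin: "i \<notin> set xs \<Longrightarrow> (\<Sum>s<length xs. if xs ! s = i then f s else 0) = 0"
  by (auto intro!: sum.neutral)

lemma sum_nth_eq_split:
  assumes "distinct xs" "xs = as @ x # bs"
  shows "(\<Sum>s<length xs. if xs ! s = x then f s else 0) = f (length as)"
proof -
  have x: "length as < length xs" "xs ! length as = x"
    using assms(2) by auto
  then have "(\<Sum>s<length xs. if xs ! s = x then f s else 0) = (\<Sum>s<length xs. if s = length as then f s else 0)"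
    using nth_eq_iff_index_eq[OF assms(1)] by (intro sum.cong) auto
  with x show ?thesis
    by simp
qed

lemma osc_act_gen_upper:
  assumes xs: "distinct xs" "set xs \<subseteq> {1..m}" "inSl n lam \<mu>" and i: "i \<in> {1..m}" and j: "j \<in> {1..n}"
  shows "osc_act m n lam i (m + j) (gen m n lam xs \<mu>) =
    (\<lambda>d. (-1) ^ length xs * \<mu> j * gen m n lam (i # xs) (shift \<mu> j (-1)) d)"
proof (rule ext, clarify)
  fix T \<nu>
  let ?C = "i \<notin> set xs \<and> T = insert i (set xs) \<and> \<nu> = shift \<mu> j (-1) \<and> inSl n lam \<nu>"
  have "osc_act m n lam i (m + j) (gen m n lam xs \<mu>) (T, \<nu>) =
      (if ?C then wedge_sign (set xs) i * (\<mu> j * (-1) ^ inversions xs) else 0)"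
    using xs i j by (auto simp: osc_act_def creation_def annihilation_def gen_apply shift_eq_iff shift_apply)
  moreover have "(-1) ^ length xs * \<mu> j * gen m n lam (i # xs) (shift \<mu> j (-1)) (T, \<nu>) =
      (if ?C then (-1) ^ length xs * \<mu> j * (-1) ^ inversions (i # xs) else 0)"
    using xs i by (auto simp: gen_apply)
  moreover have "(-1::complex) ^ inversions (i # xs) = (-1) ^ (inversions xs + length xs) * wedge_sign (set xs) i"
    if "i \<notin> set xs"
    using sign_inversions_insert[of "[]" i xs] that xs by simp
  ultimately show "osc_act m n lam i (m + j) (gen m n lam xs \<mu>) (T, \<nu>) =
      (-1) ^ length xs * \<mu> j * gen m n lam (i # xs) (shift \<mu> j (-1)) (T, \<nu>)"
    by (cases ?C) (simp_all add: power_add)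
qed

lemma osc_act_gen_gln:
  assumes xs: "distinct xs" "set xs \<subseteq> {1..m}" "inSl n lam \<mu>" and l: "l \<in> {1..n}" and j: "j \<in> {1..n}"
  shows "osc_act m n lam (m + l) (m + j) (gen m n lam xs \<mu>) =
    (\<lambda>d. \<mu> j * gen m n lam xs (shift (shift \<mu> j (-1)) l 1) d)"
proof (rule ext, clarify)
  fix T \<nu>
  define \<mu>' where "\<mu>' = shift (shift \<mu> j (-1)) l 1"
  have unshift: "shift \<mu>' l (-1) = shift \<mu> j (-1)"
    by (simp add: \<mu>'_def)
  have "osc_act m n lam (m + l) (m + j) (gen m n lam xs \<mu>) (T, \<nu>) =
      (if inSl n lam \<nu> \<and> inSl n lam (shift \<nu> l (-1)) \<and> T = set xs \<and> \<nu> = \<mu>'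
       then \<mu> j * (-1) ^ inversions xs else 0)"
    using xs l j unshift by (auto simp: osc_act_def creation_def annihilation_def gen_apply shift_eq_iff shift_apply \<mu>'_def)
  moreover have "\<mu> j * gen m n lam xs \<mu>' (T, \<nu>) =
      (if inSl n lam \<mu>' \<and> T = set xs \<and> \<nu> = \<mu>' then \<mu> j * (-1) ^ inversions xs else 0)"
    using xs by (simp add: gen_apply)
  moreover have "inSl n lam (shift \<mu> j (-1))" if "inSl n lam \<mu>'" "\<mu> j \<noteq> 0"
  proof (cases "l = j")
    case True
    then show ?thesis
      using inSl_shift_pred[OF xs(3) j that(2)] by simp
  next
    case False
    then show ?thesis
      using inSl_shift_shift(1)[OF xs(3), of j "-1" l 1] that(1) by (simp add: \<mu>'_def)
  qed
  ultimately show "osc_act m n lam (m + l) (m + j) (gen m n lam xs \<mu>) (T, \<nu>) =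
      \<mu> j * gen m n lam xs (shift (shift \<mu> j (-1)) l 1) (T, \<nu>)"
    by (cases "inSl n lam \<mu>' \<and> T = set xs \<and> \<nu> = \<mu>'") (auto simp: unshift \<mu>'_def[symmetric])
qed

lemma osc_act_gen_lower:
  assumes xs: "distinct xs" "set xs \<subseteq> {1..m}" "inSl n lam \<mu>" and i: "i \<in> {1..m}" and j: "j \<in> {1..n}"
  shows "osc_act m n lam (m + j) i (gen m n lam xs \<mu>) =
    (\<lambda>d. \<Sum>p<length xs. if xs ! p = i then
        (-1) ^ (length xs - Suc p) * gen m n lam (take p xs @ drop (Suc p) xs) (shift \<mu> j 1) d
      else 0)"
proof (rule ext, clarify)
  fix T \<nu>
  let ?C = "inSl n lam \<nu> \<and> i \<notin> T \<and> finite T \<and> insert i T = set xs \<and> \<nu> = shift \<mu> j 1"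
  have op: "osc_act m n lam (m + j) i (gen m n lam xs \<mu>) (T, \<nu>) =
      (if ?C then wedge_sign T i * (-1) ^ inversions xs else 0)"
    using xs i j by (auto simp: osc_act_def creation_def annihilation_def gen_apply shift_eq_iff)
  show "osc_act m n lam (m + j) i (gen m n lam xs \<mu>) (T, \<nu>) =
      (\<Sum>p<length xs. if xs ! p = i then
        (-1) ^ (length xs - Suc p) * gen m n lam (take p xs @ drop (Suc p) xs) (shift \<mu> j 1) (T, \<nu>)
      else 0)"
  proof (cases "i \<in> set xs")
    case False
    then have "\<not> ?C"
      by auto
    with False show ?thesis
      unfolding op if_not_P[OF \<open>\<not> ?C\<close>] by (simp add: sum_nth_eq_notin)
  next
    case True
    then obtain as bs where xs_eq: "xs = as @ i # bs"
      by (meson split_list)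
    have ab: "distinct (as @ bs)" "i \<notin> set (as @ bs)" "set (as @ bs) \<subseteq> {1..m}"
      using xs(1,2) xs_eq by auto
    have "(\<Sum>p<length xs. if xs ! p = i then
        (-1) ^ (length xs - Suc p) * gen m n lam (take p xs @ drop (Suc p) xs) (shift \<mu> j 1) (T, \<nu>)
      else 0) = (-1) ^ length bs * gen m n lam (as @ bs) (shift \<mu> j 1) (T, \<nu>)"
      by (simp only: sum_nth_eq_split[OF xs(1) xs_eq]) (simp add: xs_eq)
    moreover have "(-1::complex) ^ inversions xs =
        (-1) ^ (inversions (as @ bs) + length bs) * wedge_sign (set (as @ bs)) i"
      using sign_inversions_insert xs(1) xs_eq by blast
    moreover have "?C \<longleftrightarrow> inSl n lam (shift \<mu> j 1) \<and> T = set (as @ bs) \<and> \<nu> = shift \<mu> j 1"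
      using ab xs_eq by auto
    ultimately show ?thesis
      unfolding op using ab by (auto simp: gen_apply power_add)
  qed
qed

lemma osc_act_gen_glm:
  assumes xs: "distinct xs" "set xs \<subseteq> {1..m}" "inSl n lam \<mu>" and i: "i \<in> {1..m}" and k: "k \<in> {1..m}"
  shows "osc_act m n lam i k (gen m n lam xs \<mu>) =
    (\<lambda>d. \<Sum>s<length xs. if xs ! s = k then gen m n lam (xs[s := i]) \<mu> d else 0)"
proof (rule ext, clarify)
  fix T \<nu>
  let ?C = "i \<in> T \<and> finite T \<and> k \<notin> T - {i} \<and> insert k (T - {i}) = set xs \<and> \<nu> = \<mu>"
  have op: "osc_act m n lam i k (gen m n lam xs \<mu>) (T, \<nu>) =
      (if ?C then wedge_sign (T - {i}) i * (wedge_sign (T - {i}) k * (-1) ^ inversions xs) else 0)"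
    using xs i k by (auto simp: osc_act_def creation_def annihilation_def gen_apply)
  show "osc_act m n lam i k (gen m n lam xs \<mu>) (T, \<nu>) =
      (\<Sum>s<length xs. if xs ! s = k then gen m n lam (xs[s := i]) \<mu> (T, \<nu>) else 0)"
  proof (cases "k \<in> set xs")
    case False
    then have "\<not> ?C"
      by auto
    with False show ?thesis
      unfolding op if_not_P[OF \<open>\<not> ?C\<close>] by (simp add: sum_nth_eq_notin)
  next
    case True
    then obtain as bs where xs_eq: "xs = as @ k # bs"
      by (meson split_list)
    have ab: "distinct (as @ bs)" "k \<notin> set (as @ bs)" "set (as @ bs) \<subseteq> {1..m}"
      using xs(1,2) xs_eq by auto
    have "(\<Sum>s<length xs. if xs ! s = k then gen m n lam (xs[s := i]) \<mu> (T, \<nu>) else 0) =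
        gen m n lam (as @ i # bs) \<mu> (T, \<nu>)"
      by (simp only: sum_nth_eq_split[OF xs(1) xs_eq]) (simp add: xs_eq)
    moreover have "(-1::complex) ^ inversions xs =
        (-1) ^ (inversions (as @ bs) + length bs) * wedge_sign (set (as @ bs)) k"
      using sign_inversions_insert xs(1) xs_eq by blast
    moreover have "(-1::complex) ^ inversions (as @ i # bs) =
        (-1) ^ (inversions (as @ bs) + length bs) * wedge_sign (set (as @ bs)) i" if "i \<notin> set (as @ bs)"
      using sign_inversions_insert[of as i bs] ab(1) that by simp
    moreover have "?C \<longleftrightarrow> i \<notin> set (as @ bs) \<and> T = insert i (set (as @ bs)) \<and> \<nu> = \<mu>"
      using ab xs_eq by auto
    ultimately show ?thesis
      unfolding op using ab xs(3) i by (auto simp: gen_apply)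
  qed
qed

lemma gen_sorted_list_of_set:
  assumes "(S, \<mu>) \<in> Mbasis m n lam"
  shows "gen m n lam (sorted_list_of_set S) \<mu> = indicator {(S, \<mu>)}"
proof -
  have "S \<subseteq> {1..m}" "inSl n lam \<mu>"
    using assms by (auto simp: Mbasis_def)
  moreover have "finite S"
    using finite_subset[OF calculation(1)] by simp
  ultimately show ?thesis
    by (auto simp: gen_def indicator_def inversions_sorted fun_eq_iff)
qed

lemma basis_act_eq_osc_act:
  assumes c: "c \<in> Mbasis m n lam" and a: "a \<in> {1..m+n}" and b: "b \<in> {1..m+n}"
  shows "basis_act m n lam a b c = osc_act m n lam a b (indicator {c})"
proof -
  obtain S \<mu> where c_eq: "c = (S, \<mu>)"
    by fastforce
  define ys where "ys = sorted_list_of_set S"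
  have S: "S \<subseteq> {1..m}" "inSl n lam \<mu>"
    using c c_eq by (auto simp: Mbasis_def)
  then have ys: "distinct ys" "set ys \<subseteq> {1..m}" "inSl n lam \<mu>"
    using finite_subset[OF S(1)] by (auto simp: ys_def)
  have "basis_act m n lam a b c = osc_act m n lam a b (gen m n lam ys \<mu>)"
  proof (cases "a \<le> m"; cases "b \<le> m")
    assume "a \<le> m" "b \<le> m"
    then show ?thesis
      using osc_act_gen_glm[OF ys, of a b] a b by (simp add: basis_act_def c_eq Let_def le_diff_conv2 flip: ys_def)
  next
    assume "a \<le> m" "\<not> b \<le> m"
    then show ?thesis
      using osc_act_gen_upper[OF ys, of a "b - m"] a b by (simp add: basis_act_def c_eq Let_def le_diff_conv2 flip: ys_def)
  next
    assume "\<not> a \<le> m" "b \<le> m"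
    then show ?thesis
      using osc_act_gen_lower[OF ys, of b "a - m"] a b by (simp add: basis_act_def c_eq Let_def le_diff_conv2 flip: ys_def)
  next
    assume "\<not> a \<le> m" "\<not> b \<le> m"
    then show ?thesis
      using osc_act_gen_gln[OF ys, of "a - m" "b - m"] a b by (simp add: basis_act_def c_eq Let_def le_diff_conv2 flip: ys_def)
  qed
  then show ?thesis
    using gen_sorted_list_of_set c by (simp add: c_eq ys_def)
qed

lemma finite_support_expansion:
  fixes v :: "'a \<Rightarrow> 'b::semiring_1"
  assumes "finite {c. v c \<noteq> 0}"
  shows "v = (\<lambda>x. \<Sum>c\<in>{c. v c \<noteq> 0}. v c * indicator {c} x)"
proof
  fix x
  have "(\<Sum>c\<in>{c. v c \<noteq> 0}. v c * indicator {c} x) = (\<Sum>c\<in>{c. v c \<noteq> 0}. if x = c then v c else 0)"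
    by (intro sum.cong) (auto simp: indicator_def)
  then show "v x = (\<Sum>c\<in>{c. v c \<noteq> 0}. v c * indicator {c} x)"
    using assms by simp
qed

lemma actM_eq_osc_act:
  assumes v: "v \<in> Mspace m n lam" and a: "a \<in> {1..m+n}" and b: "b \<in> {1..m+n}"
  shows "actM m n lam a b v = osc_act m n lam a b v"
proof -
  let ?C = "{c. v c \<noteq> 0}"
  have fin: "finite ?C"
    using v by (simp add: Mspace_def)
  have "actM m n lam a b v = (\<lambda>d. \<Sum>c\<in>?C. v c * osc_act m n lam a b (indicator {c}) d)"
    unfolding actM_def
  proof (intro ext sum.cong refl)
    fix d c
    assume "c \<in> ?C"
    then have "c \<in> Mbasis m n lam"
      using v unfolding Mspace_def by blast
    then show "v c * basis_act m n lam a b c d = v c * osc_act m n lam a b (indicator {c}) d"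
      using basis_act_eq_osc_act a b by simp
  qed
  also have "\<dots> = (\<lambda>d. \<Sum>c\<in>?C. osc_act m n lam a b (\<lambda>x. v c * indicator {c} x) d)"
    by (simp only: monomial_op_scale[OF monomial_op_osc_act])
  also have "\<dots> = osc_act m n lam a b (\<lambda>x. \<Sum>c\<in>?C. v c * indicator {c} x)"
    by (rule monomial_op_sum[OF monomial_op_osc_act, symmetric])
  also have "\<dots> = osc_act m n lam a b v"
    by (simp only: finite_support_expansion[OF fin, symmetric])
  finally show ?thesis .
qed

lemma rho_eq_osc_act:
  "v \<in> Mspace m n lam \<Longrightarrow>
    rho m n lam X v = (\<lambda>d. \<Sum>a\<in>{1..m+n}. \<Sum>b\<in>{1..m+n}. X a b * osc_act m n lam a b v d)"
  unfolding rho_def by (intro ext sum.cong refl) (simp add: actM_eq_osc_act)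

section \<open>Closure, grading and the bracket\<close>

lemma rho_nonzero:
  assumes "v \<in> Mspace m n lam" "rho m n lam X v d \<noteq> 0"
  obtains a b where "a \<in> {1..m+n}" "b \<in> {1..m+n}" "X a b \<noteq> 0" "osc_act m n lam a b v d \<noteq> 0"
proof -
  have "(\<Sum>a\<in>{1..m+n}. \<Sum>b\<in>{1..m+n}. X a b * osc_act m n lam a b v d) \<noteq> 0"
    using assms by (simp add: rho_eq_osc_act)
  then obtain a where "a \<in> {1..m+n}" "(\<Sum>b\<in>{1..m+n}. X a b * osc_act m n lam a b v d) \<noteq> 0"
    by (meson sum.not_neutral_contains_not_neutral)
  moreover from this(2) obtain b where "b \<in> {1..m+n}" "X a b * osc_act m n lam a b v d \<noteq> 0"
    by (meson sum.not_neutral_contains_not_neutral)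
  ultimately show ?thesis
    using that by simp
qed

lemma Mspace_rho:
  assumes v: "v \<in> Mspace m n lam"
  shows "rho m n lam X v \<in> Mspace m n lam"
proof -
  let ?I = "{1..m+n}"
  let ?U = "\<Union>a\<in>?I. \<Union>b\<in>?I. {d. osc_act m n lam a b v d \<noteq> 0}"
  have osc: "osc_act m n lam a b v \<in> Mspace m n lam" if "a \<in> ?I" "b \<in> ?I" for a b
    using v that by (rule Mspace_osc_act)
  have sub: "{d. rho m n lam X v d \<noteq> 0} \<subseteq> ?U"
  proof
    fix d
    assume "d \<in> {d. rho m n lam X v d \<noteq> 0}"
    then have "rho m n lam X v d \<noteq> 0"
      by simp
    then obtain a b where "a \<in> ?I" "b \<in> ?I" "osc_act m n lam a b v d \<noteq> 0"
      using rho_nonzero[OF v] by blast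
    then show "d \<in> ?U"
      by blast
  qed
  have "finite ?U"
    using osc by (intro finite_UN_I finite_atLeastAtMost) (simp add: Mspace_def)
  then have "finite {d. rho m n lam X v d \<noteq> 0}"
    using sub by (rule finite_subset[rotated])
  moreover have "d \<in> Mbasis m n lam" if "d \<in> ?U" for d
    using that osc unfolding Mspace_def by blast
  ultimately show ?thesis
    using sub unfolding Mspace_def by blast
qed

definition depth :: "nat \<Rightarrow> (nat \<Rightarrow> complex) \<Rightarrow> (nat \<Rightarrow> complex) \<Rightarrow> complex" where
  "depth n lam \<nu> = (\<Sum>j=1..n. lam j - \<nu> j)"

lemma depth_shift: "j \<in> {1..n} \<Longrightarrow> depth n lam (shift \<nu> j e) = depth n lam \<nu> - e"
proof -
  assume j: "j \<in> {1..n}"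
  have "depth n lam (shift \<nu> j e) = (\<Sum>i=1..n. (lam i - \<nu> i) - (if i = j then e else 0))"
    unfolding depth_def by (intro sum.cong) (auto simp: shift_apply)
  also have "\<dots> = depth n lam \<nu> - e"
    using j by (simp add: sum_subtractf depth_def)
  finally show ?thesis .
qed

lemma Mhom_transfer:
  assumes v: "Mhom n lam v q"
    and w: "\<And>d. w d \<noteq> 0 \<Longrightarrow> \<exists>c. v c \<noteq> 0 \<and> depth n lam (snd d) = depth n lam (snd c) + of_int e"
  shows "Mhom n lam w (q \<noteq> odd e)"
  unfolding Mhom_def
proof (intro allI impI)
  fix d
  assume "w d \<noteq> 0"
  then obtain c where c: "v c \<noteq> 0" "depth n lam (snd d) = depth n lam (snd c) + of_int e"
    using w by blast
  then obtain k where "depth n lam (snd c) = of_int k" "odd k = q"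
    using v unfolding Mhom_def depth_def by blast
  with c(2) have "depth n lam (snd d) = of_int (k + e) \<and> odd (k + e) = (q \<noteq> odd e)"
    by auto
  then show "\<exists>k::int. (\<Sum>j=1..n. lam j - snd d j) = of_int k \<and> odd k = (q \<noteq> odd e)"
    unfolding depth_def by blast
qed

lemma Mhom_creation:
  assumes "Mhom n lam v q" "a \<in> {1..m+n}"
  shows "Mhom n lam (creation m n lam a v) (q \<noteq> par m a)"
proof (cases "a \<le> m")
  case True
  have "Mhom n lam (creation m n lam a v) (q \<noteq> odd (0::int))"
  proof (rule Mhom_transfer[OF assms(1)])
    fix d
    assume "creation m n lam a v d \<noteq> 0"
    with True show "\<exists>c. v c \<noteq> 0 \<and> depth n lam (snd d) = depth n lam (snd c) + of_int 0"
      by (cases d) (auto simp: creation_def split: if_splits)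
  qed
  with True show ?thesis
    by (simp add: par_def)
next
  case False
  with assms(2) have j: "a - m \<in> {1..n}"
    by auto
  have "Mhom n lam (creation m n lam a v) (q \<noteq> odd (-1::int))"
  proof (rule Mhom_transfer[OF assms(1)])
    fix d
    assume nz: "creation m n lam a v d \<noteq> 0"
    obtain T \<nu> where d: "d = (T, \<nu>)"
      by fastforce
    with nz False have "v (T, shift \<nu> (a - m) (-1)) \<noteq> 0"
      by (auto simp: creation_def split: if_splits)
    moreover have "depth n lam \<nu> = depth n lam (shift \<nu> (a - m) (-1)) + of_int (-1)"
      using depth_shift[OF j] by simp
    ultimately show "\<exists>c. v c \<noteq> 0 \<and> depth n lam (snd d) = depth n lam (snd c) + of_int (-1)"
      by (intro exI[of _ "(T, shift \<nu> (a - m) (-1))"]) (simp add: d)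
  qed
  with False show ?thesis
    by (simp add: par_def)
qed

lemma Mhom_annihilation:
  assumes "Mhom n lam v q" "a \<in> {1..m+n}"
  shows "Mhom n lam (annihilation m n lam a v) (q \<noteq> par m a)"
proof (cases "a \<le> m")
  case True
  have "Mhom n lam (annihilation m n lam a v) (q \<noteq> odd (0::int))"
  proof (rule Mhom_transfer[OF assms(1)])
    fix d
    assume "annihilation m n lam a v d \<noteq> 0"
    with True show "\<exists>c. v c \<noteq> 0 \<and> depth n lam (snd d) = depth n lam (snd c) + of_int 0"
      by (cases d) (auto simp: annihilation_def split: if_splits)
  qed
  with True show ?thesis
    by (simp add: par_def)
next
  case False
  with assms(2) have j: "a - m \<in> {1..n}"
    by auto
  have "Mhom n lam (annihilation m n lam a v) (q \<noteq> odd (1::int))"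
  proof (rule Mhom_transfer[OF assms(1)])
    fix d
    assume nz: "annihilation m n lam a v d \<noteq> 0"
    obtain T \<nu> where d: "d = (T, \<nu>)"
      by fastforce
    with nz False have "v (T, shift \<nu> (a - m) 1) \<noteq> 0"
      by (auto simp: annihilation_def split: if_splits)
    moreover have "depth n lam \<nu> = depth n lam (shift \<nu> (a - m) 1) + of_int 1"
      using depth_shift[OF j] by simp
    ultimately show "\<exists>c. v c \<noteq> 0 \<and> depth n lam (snd d) = depth n lam (snd c) + of_int 1"
      by (intro exI[of _ "(T, shift \<nu> (a - m) 1)"]) (simp add: d)
  qed
  with False show ?thesis
    by (simp add: par_def)
qed

lemma Mhom_rho:
  assumes X: "homog m X p" and v: "v \<in> Mspace m n lam" and hv: "Mhom n lam v q"
  shows "Mhom n lam (rho m n lam X v) (p \<noteq> q)"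
  unfolding Mhom_def
proof (intro allI impI)
  fix d
  assume "rho m n lam X v d \<noteq> 0"
  then obtain a b where ab: "a \<in> {1..m+n}" "b \<in> {1..m+n}" "X a b \<noteq> 0" "osc_act m n lam a b v d \<noteq> 0"
    using rho_nonzero[OF v] by blast
  have "Mhom n lam (osc_act m n lam a b v) ((q \<noteq> par m b) \<noteq> par m a)"
    unfolding osc_act_def using Mhom_creation Mhom_annihilation hv ab(1,2) by blast
  moreover have "((q \<noteq> par m b) \<noteq> par m a) = (p \<noteq> q)"
    using X ab(3) unfolding homog_def by blast
  ultimately show "\<exists>k::int. (\<Sum>j=1..n. lam j - snd d j) = of_int k \<and> odd k = (p \<noteq> q)"
    using ab(4) unfolding Mhom_def by metis
qed

lemma sum_swap_pairs:
  "(\<Sum>a\<in>A. \<Sum>b\<in>B. \<Sum>c\<in>C. \<Sum>d\<in>D. f a b c d) =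
    (\<Sum>c\<in>C. \<Sum>d\<in>D. \<Sum>a\<in>A. \<Sum>b\<in>B. (f a b c d :: 'x::comm_monoid_add))"
proof -
  have "(\<Sum>a\<in>A. \<Sum>b\<in>B. \<Sum>c\<in>C. \<Sum>d\<in>D. f a b c d) = (\<Sum>a\<in>A. \<Sum>c\<in>C. \<Sum>b\<in>B. \<Sum>d\<in>D. f a b c d)"
    by (rule sum.cong[OF refl], rule sum.swap)
  also have "\<dots> = (\<Sum>c\<in>C. \<Sum>a\<in>A. \<Sum>b\<in>B. \<Sum>d\<in>D. f a b c d)"
    by (rule sum.swap)
  also have "\<dots> = (\<Sum>c\<in>C. \<Sum>a\<in>A. \<Sum>d\<in>D. \<Sum>b\<in>B. f a b c d)"
    by (rule sum.cong[OF refl], rule sum.cong[OF refl], rule sum.swap)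
  also have "\<dots> = (\<Sum>c\<in>C. \<Sum>d\<in>D. \<Sum>a\<in>A. \<Sum>b\<in>B. f a b c d)"
    by (rule sum.cong[OF refl], rule sum.swap)
  finally show ?thesis .
qed

lemma sum_kronecker_mmul_left:
  "(\<Sum>a\<in>{1..N}. \<Sum>b\<in>{1..N}. \<Sum>c\<in>{1..N}. \<Sum>d\<in>{1..N}. X a b * Y c d * (if b = c then f a d else 0)) =
    (\<Sum>a\<in>{1..N}. \<Sum>d\<in>{1..N}. mmul N X Y a d * (f a d :: complex))"
proof -
  have inner: "(\<Sum>c\<in>{1..N}. \<Sum>d\<in>{1..N}. X a b * Y c d * (if b = c then f a d else 0)) =
      (\<Sum>d\<in>{1..N}. X a b * Y b d * f a d)" if "b \<in> {1..N}" for a b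
    using that by (subst sum.swap) (simp add: if_distrib[of "\<lambda>t. _ * t"] sum.delta' cong: if_cong)
  have "(\<Sum>a\<in>{1..N}. \<Sum>b\<in>{1..N}. \<Sum>c\<in>{1..N}. \<Sum>d\<in>{1..N}. X a b * Y c d * (if b = c then f a d else 0)) =
      (\<Sum>a\<in>{1..N}. \<Sum>b\<in>{1..N}. \<Sum>d\<in>{1..N}. X a b * Y b d * f a d)"
    by (rule sum.cong[OF refl], rule sum.cong[OF refl]) (rule inner)
  also have "\<dots> = (\<Sum>a\<in>{1..N}. \<Sum>d\<in>{1..N}. \<Sum>b\<in>{1..N}. X a b * Y b d * f a d)"
    by (rule sum.cong[OF refl], rule sum.swap)
  finally show ?thesis
    by (simp add: mmul_def sum_distrib_right)
qed

lemma sum_kronecker_mmul_right: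
  "(\<Sum>a\<in>{1..N}. \<Sum>b\<in>{1..N}. \<Sum>c\<in>{1..N}. \<Sum>d\<in>{1..N}. X a b * Y c d * (if d = a then f c b else 0)) =
    (\<Sum>c\<in>{1..N}. \<Sum>b\<in>{1..N}. mmul N Y X c b * (f c b :: complex))"
proof -
  have "(\<Sum>a\<in>{1..N}. \<Sum>b\<in>{1..N}. \<Sum>c\<in>{1..N}. \<Sum>d\<in>{1..N}. X a b * Y c d * (if d = a then f c b else 0)) =
      (\<Sum>a\<in>{1..N}. \<Sum>b\<in>{1..N}. \<Sum>c\<in>{1..N}. Y c a * X a b * f c b)"
    by (intro sum.cong[OF refl]) (simp add: if_distrib[of "\<lambda>t. _ * t"] sum.delta' mult_ac cong: if_cong)
  also have "\<dots> = (\<Sum>b\<in>{1..N}. \<Sum>c\<in>{1..N}. \<Sum>a\<in>{1..N}. Y c a * X a b * f c b)"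
    by (subst sum.swap) (rule sum.cong[OF refl], rule sum.swap)
  also have "\<dots> = (\<Sum>c\<in>{1..N}. \<Sum>b\<in>{1..N}. \<Sum>a\<in>{1..N}. Y c a * X a b * f c b)"
    by (rule sum.swap)
  finally show ?thesis
    by (simp add: mmul_def sum_distrib_right)
qed

lemma rho_rho:
  assumes v: "v \<in> Mspace m n lam"
  shows "rho m n lam X (rho m n lam Y v) x =
    (\<Sum>a\<in>{1..m+n}. \<Sum>b\<in>{1..m+n}. \<Sum>c\<in>{1..m+n}. \<Sum>d\<in>{1..m+n}.
      X a b * Y c d * osc_act m n lam a b (osc_act m n lam c d v) x)"
proof -
  have "rho m n lam X (rho m n lam Y v) x =
      (\<Sum>a\<in>{1..m+n}. \<Sum>b\<in>{1..m+n}. X a b * osc_act m n lam a b (rho m n lam Y v) x)"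
    by (simp add: rho_eq_osc_act[OF Mspace_rho[OF v]])
  also have "\<dots> = (\<Sum>a\<in>{1..m+n}. \<Sum>b\<in>{1..m+n}. X a b *
      (\<Sum>c\<in>{1..m+n}. \<Sum>d\<in>{1..m+n}. Y c d * osc_act m n lam a b (osc_act m n lam c d v) x))"
    by (simp add: rho_eq_osc_act[OF v] monomial_op_sum[OF monomial_op_osc_act]
        monomial_op_scale[OF monomial_op_osc_act])
  finally show ?thesis
    by (simp add: sum_distrib_left mult.assoc)
qed

lemma rho_sbracket:
  assumes X: "homog m X p" and Y: "homog m Y q" and v: "v \<in> Mspace m n lam"
  shows "rho m n lam (sbracket (m+n) p q X Y) v =
    (\<lambda>d. rho m n lam X (rho m n lam Y v) d - psign p q * rho m n lam Y (rho m n lam X v) d)"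
proof
  fix x
  let ?I = "{1..m+n}"
  let ?E = "\<lambda>a b w. osc_act m n lam a b w x"
  have termwise: "X a b * Y c d * ?E a b (osc_act m n lam c d v) - psign p q * (X a b * Y c d * ?E c d (osc_act m n lam a b v)) =
      X a b * Y c d * (if b = c then ?E a d v else 0) - psign p q * (X a b * Y c d * (if d = a then ?E c b v else 0))"
    if "a \<in> ?I" "b \<in> ?I" "c \<in> ?I" "d \<in> ?I" for a b c d
  proof (cases "X a b = 0 \<or> Y c d = 0")
    case False
    then have "psign p q = psign (par m a \<noteq> par m b) (par m c \<noteq> par m d)"
      using X Y by (simp add: homog_def)
    then have "?E a b (osc_act m n lam c d v) - psign p q * ?E c d (osc_act m n lam a b v) =
        (if b = c then ?E a d v else 0) - psign p q * (if d = a then ?E c b v else 0)"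
      using osc_act_supercommutator[OF v that, of x] by simp
    then have "X a b * Y c d * (?E a b (osc_act m n lam c d v) - psign p q * ?E c d (osc_act m n lam a b v)) =
        X a b * Y c d * ((if b = c then ?E a d v else 0) - psign p q * (if d = a then ?E c b v else 0))"
      by (simp only:)
    then show ?thesis
      by (simp add: right_diff_distrib mult.left_commute)
  qed auto
  have YX: "rho m n lam Y (rho m n lam X v) x = (\<Sum>a\<in>?I. \<Sum>b\<in>?I. \<Sum>c\<in>?I. \<Sum>d\<in>?I.
      X a b * Y c d * ?E c d (osc_act m n lam a b v))"
    unfolding rho_rho[OF v, of Y X] by (subst sum_swap_pairs) (simp add: mult.commute)
  have "rho m n lam X (rho m n lam Y v) x - psign p q * rho m n lam Y (rho m n lam X v) x =
      (\<Sum>a\<in>?I. \<Sum>b\<in>?I. \<Sum>c\<in>?I. \<Sum>d\<in>?I.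
        X a b * Y c d * ?E a b (osc_act m n lam c d v) - psign p q * (X a b * Y c d * ?E c d (osc_act m n lam a b v)))"
    unfolding rho_rho[OF v, of X Y] YX by (simp add: sum_subtractf sum_distrib_left)
  also have "\<dots> = (\<Sum>a\<in>?I. \<Sum>b\<in>?I. \<Sum>c\<in>?I. \<Sum>d\<in>?I.
        X a b * Y c d * (if b = c then ?E a d v else 0) - psign p q * (X a b * Y c d * (if d = a then ?E c b v else 0)))"
    by (intro sum.cong refl termwise)
  also have "\<dots> = (\<Sum>a\<in>?I. \<Sum>b\<in>?I. \<Sum>c\<in>?I. \<Sum>d\<in>?I. X a b * Y c d * (if b = c then ?E a d v else 0)) -
      psign p q * (\<Sum>a\<in>?I. \<Sum>b\<in>?I. \<Sum>c\<in>?I. \<Sum>d\<in>?I. X a b * Y c d * (if d = a then ?E c b v else 0))"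
    by (simp only: sum_subtractf sum_distrib_left)
  also have "\<dots> = (\<Sum>a\<in>?I. \<Sum>c\<in>?I. mmul (m+n) X Y a c * ?E a c v) -
      psign p q * (\<Sum>a\<in>?I. \<Sum>c\<in>?I. mmul (m+n) Y X a c * ?E a c v)"
    by (simp only: sum_kronecker_mmul_left sum_kronecker_mmul_right)
  also have "\<dots> = (\<Sum>a\<in>?I. \<Sum>c\<in>?I. (mmul (m+n) X Y a c - psign p q * mmul (m+n) Y X a c) * ?E a c v)"
    by (simp add: left_diff_distrib sum_subtractf sum_distrib_left mult.assoc)
  also have "\<dots> = rho m n lam (sbracket (m+n) p q X Y) v x"
    by (simp add: rho_eq_osc_act[OF v] sbracket_def)
  finally show "rho m n lam (sbracket (m+n) p q X Y) v x =
      rho m n lam X (rho m n lam Y v) x - psign p q * rho m n lam Y (rho m n lam X v) x"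
    by simp
qed

lemma gen_Mspace: "gen m n lam xs \<mu> \<in> Mspace m n lam"
proof -
  have "{b. gen m n lam xs \<mu> b \<noteq> 0} \<subseteq> {(set xs, \<mu>)}"
    by (auto simp: gen_def split: if_splits)
  then show ?thesis
    by (auto simp: Mspace_def Mbasis_def gen_def intro: finite_subset split: if_splits)
qed

lemma gen_nonzeroD:
  "gen m n lam xs \<mu> \<noteq> (\<lambda>_. 0) \<Longrightarrow> distinct xs \<and> set xs \<subseteq> {1..m} \<and> inSl n lam \<mu>"
  by (auto simp: gen_def split: if_splits)

lemma rho_Eunit:
  assumes "w \<in> Mspace m n lam" "a \<in> {1..m+n}" "b \<in> {1..m+n}"
  shows "rho m n lam (Eunit a b) w = osc_act m n lam a b w"
proof (rule ext)
  fix d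
  have "(\<Sum>b'\<in>{1..m+n}. Eunit a b a' b' * osc_act m n lam a' b' w d) = (if a' = a then osc_act m n lam a b w d else 0)"
    for a'
    using assms(3) by (cases "a' = a") (simp_all add: Eunit_def if_distrib[of "\<lambda>x. x * _"] cong: if_cong)
  then show "rho m n lam (Eunit a b) w d = osc_act m n lam a b w d"
    using assms by (simp add: rho_eq_osc_act)
qed

theorem lemma4p1:
  fixes m n :: nat and lam :: "nat \<Rightarrow> complex"
  shows
    "(\<forall>X\<in>glmn m n. \<forall>v\<in>Mspace m n lam. rho m n lam X v \<in> Mspace m n lam)
   \<and> (\<forall>X\<in>glmn m n. \<forall>p q v. homog m X p \<longrightarrow> v \<in> Mspace m n lam \<longrightarrow> Mhom n lam v q \<longrightarrow>
        Mhom n lam (rho m n lam X v) (p \<noteq> q))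
   \<and> (\<forall>X\<in>glmn m n. \<forall>Y\<in>glmn m n. \<forall>p q v. homog m X p \<longrightarrow> homog m Y q \<longrightarrow> v \<in> Mspace m n lam \<longrightarrow>
        rho m n lam (sbracket (m+n) p q X Y) v =
        (\<lambda>d. rho m n lam X (rho m n lam Y v) d - psign p q * rho m n lam Y (rho m n lam X v) d))
   \<and> (\<forall>xs mu. gen m n lam xs mu \<noteq> (\<lambda>_. 0) \<longrightarrow>
        (\<forall>i\<in>{1..m}. \<forall>k\<in>{1..m}.
           rho m n lam (Eunit i k) (gen m n lam xs mu) =
           (\<lambda>d. \<Sum>s<length xs. if xs ! s = k then gen m n lam (xs[s := i]) mu d else 0))
      \<and> (\<forall>l\<in>{1..n}. \<forall>j\<in>{1..n}.
           rho m n lam (Eunit (m+l) (m+j)) (gen m n lam xs mu) =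
           (\<lambda>d. mu j * gen m n lam xs (shift (shift mu j (-1)) l 1) d))
      \<and> (\<forall>i\<in>{1..m}. \<forall>j\<in>{1..n}.
           rho m n lam (Eunit i (m+j)) (gen m n lam xs mu) =
           (\<lambda>d. (-1) ^ length xs * mu j * gen m n lam (i # xs) (shift mu j (-1)) d)
         \<and> rho m n lam (Eunit (m+j) i) (gen m n lam xs mu) =
           (if i \<notin> set xs then (\<lambda>_. 0) else
            (\<lambda>d. \<Sum>p<length xs. if xs ! p = i then
               (-1) ^ (length xs - Suc p) * gen m n lam (take p xs @ drop (Suc p) xs) (shift mu j 1) d
             else 0))))"
  using gen_nonzeroD
  by (intro conjI ballI allI impI Mspace_rho Mhom_rho rho_sbracket)
    (auto simp: rho_Eunit gen_Mspace sum_nth_eq_notin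
      osc_act_gen_glm osc_act_gen_gln osc_act_gen_upper osc_act_gen_lower)

end
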